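(* Let $\alpha>0$ and let $n\ge2$ be an integer. Then, as functions on $\mathbb{R}\setminus\{0\}$, $$n^{\alpha-1}\,f_{\frac{\alpha}{n}}*f_{\frac{\alpha+1}{n}}*f_{\frac{\alpha+2}{n}}*\cdots*f_{\frac{\alpha+n-1}{n}}=f_{\frac1n}*f_{\frac2n}*\cdots*f_{\frac{n-1}{n}}*f_\alpha .$$
   Context: For $\beta>0$, $f_\beta:\mathbb{R}\to\mathbb{R}$ is defined by $f_\beta(t)=0$ for $t<0$ and $f_\beta(t)=t^{\beta-1}$ for $t>0$. For functions vanishing on $(-\infty,0)$, convolution is $(f*g)(t)=\int_0^t f(\tau)g(t-\tau)\,d\tau$ for $t>0$ and $0$ for $t<0$; convolution is associative and commutative here. *)

theory Defs
  imports "HOL-Analysis.Analysis"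
begin

text \<open>The kernel f_beta: 0 for t < 0, t^(beta-1) for t > 0 (value at 0 irrelevant, set to 0).\<close>
definition fpow :: "real \<Rightarrow> real \<Rightarrow> real" where
  "fpow \<beta> t = (if t > 0 then t powr (\<beta> - 1) else 0)"

text \<open>Convolution of functions vanishing on the negative axis (Lebesgue integral).\<close>
definition conv :: "(real \<Rightarrow> real) \<Rightarrow> (real \<Rightarrow> real) \<Rightarrow> real \<Rightarrow> real" where
  "conv f g t = (if t > 0 then (LINT \<tau>:{0..t}|lborel. f \<tau> * g (t - \<tau>)) else 0)"

fun conv_list :: "(real \<Rightarrow> real) list \<Rightarrow> real \<Rightarrow> real" where
  "conv_list [] = (\<lambda>t. 0)"
| "conv_list [f] = f"
| "conv_list (f # fs) = conv f (conv_list fs)"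

end

theory Submission
  imports Defs
begin

text \<open>Convolving power kernels adds exponents: a Beta integral gives
  \<open>f_a * f_b = B(a,b) f_(a+b)\<close>, so the iterated convolution of \<open>f_b1, ..., f_bk\<close> is
  \<open>\<Gamma>(b1)\<cdots>\<Gamma>(bk) / \<Gamma>(b1+\<cdots>+bk)\<close> times \<open>f_(b1+\<cdots>+bk)\<close>. The exponents on both
  sides sum to \<open>\<alpha> + (n-1)/2\<close>, so the identity is Gauss's multiplication formula
  \<open>n^(\<alpha>-1) \<Prod>k<n. \<Gamma>((\<alpha>+k)/n) = \<Gamma>(\<alpha>) \<Prod>0<k<n. \<Gamma>(k/n)\<close>. Taking Euler's product
  for \<open>\<Gamma>\<close> along the subsequence \<open>n m\<close>, the quotient \<open>n^\<alpha> \<Prod>k<n. \<Gamma>((\<alpha>+k)/n) / \<Gamma>(\<alpha>)\<close>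
  becomes a limit of expressions independent of \<open>\<alpha>\<close>, hence equals its value at \<open>\<alpha> = 1\<close>.\<close>

lemma fpow_borel_measurable [measurable]: "fpow a \<in> borel_measurable borel"
  unfolding fpow_def by measurable

lemma has_integral_powr_mult_powr_diff:
  fixes a b t :: real
  assumes a: "a > 0" and b: "b > 0" and t: "t > 0"
  shows "((\<lambda>x. x powr (a - 1) * (t - x) powr (b - 1)) has_integral t powr (a + b - 1) * Beta a b) {0..t}"
proof -
  have "((\<lambda>u. u powr (a - 1) * (1 - u) powr (b - 1)) has_integral Beta a b) (cbox 0 1)"
    using has_integral_Beta_real[OF a b] by simp
  from has_integral_affinity[OF this, of "1/t" 0] t
  have scaled: "((\<lambda>x. (x/t) powr (a - 1) * (1 - x/t) powr (b - 1)) has_integral t * Beta a b)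
      ((\<lambda>x. t * x) ` {0..1})"
    by simp
  have image: "(\<lambda>x. t * x) ` {0..1} = {0..t}"
    using t by (auto simp: image_iff intro!: bexI[where x="_/t"])
  have integrand: "(x/t) powr (a - 1) * (1 - x/t) powr (b - 1)
      = t powr (2 - a - b) * (x powr (a - 1) * (t - x) powr (b - 1))"
    if "x \<in> {0..t}" for x
  proof -
    have "1 - x/t = (t - x) / t" using t by (simp add: field_simps)
    then have "(x/t) powr (a - 1) * (1 - x/t) powr (b - 1)
        = x powr (a - 1) * (t - x) powr (b - 1) / (t powr (a - 1) * t powr (b - 1))"
      using that t by (simp add: powr_divide)
    moreover have "1 / (t powr (a - 1) * t powr (b - 1)) = t powr (2 - a - b)"
      using t by (simp add: powr_add[symmetric] powr_minus_divide[symmetric] diff_diff_eq)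
    ultimately show ?thesis by (metis times_divide_eq_right mult.commute mult.right_neutral)
  qed
  have "((\<lambda>x. t powr (2 - a - b) * (x powr (a - 1) * (t - x) powr (b - 1))) has_integral t * Beta a b) {0..t}"
    using scaled image integrand by (metis (no_types, lifting) has_integral_cong)
  from has_integral_mult_right[OF this, of "t powr (a + b - 2)"]
  moreover have "t powr (a + b - 2) * t powr (2 - a - b) = 1"
    using t by (simp add: powr_add[symmetric])
  moreover have "t powr (a + b - 2) * t = t powr (a + b - 1)"
    using t powr_add[of t "a + b - 2" 1] by simp
  ultimately show ?thesis by (simp add: mult.assoc[symmetric])
qed

lemma conv_fpow_fpow:
  assumes a: "a > 0" and b: "b > 0"
  shows "conv (fpow a) (fpow b) t = Beta a b * fpow (a + b) t"
proof (cases "t > 0")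
  case False
  then show ?thesis by (simp add: conv_def fpow_def)
next
  case t: True
  define g where "g x = x powr (a - 1) * (t - x) powr (b - 1)" for x :: real
  have hk: "(g has_integral t powr (a + b - 1) * Beta a b) {0..t}"
    unfolding g_def by (rule has_integral_powr_mult_powr_diff[OF a b t])
  have "g absolutely_integrable_on {0..t}"
    by (rule nonnegative_absolutely_integrable_1) (use hk in \<open>auto simp: g_def\<close>)
  then have "set_lebesgue_integral lebesgue {0..t} g = t powr (a + b - 1) * Beta a b"
    using has_integral_set_lebesgue hk has_integral_unique by blast
  moreover have "(\<lambda>x. indicator {0..t} x *\<^sub>R g x) \<in> borel_measurable lborel"
    unfolding g_def by measurable
  then have "set_lebesgue_integral lborel {0..t} g = set_lebesgue_integral lebesgue {0..t} g"
    unfolding set_lebesgue_integral_def by (simp add: integral_completion)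
  moreover have "set_lebesgue_integral lborel {0..t} (\<lambda>x. fpow a x * fpow b (t - x))
      = set_lebesgue_integral lborel {0..t} g"
    by (rule set_lebesgue_integral_cong) (auto simp: fpow_def g_def)
  ultimately show ?thesis
    using t by (simp add: conv_def fpow_def mult.commute)
qed

lemma conv_mult_right: "conv f (\<lambda>s. c * g s) t = c * conv f g t"
proof -
  have "(\<lambda>\<tau>. f \<tau> * (c * g (t - \<tau>))) = (\<lambda>\<tau>. c * (f \<tau> * g (t - \<tau>)))"
    by (simp add: mult_ac)
  then show ?thesis by (simp add: conv_def set_integral_mult_right)
qed

lemma conv_list_map_fpow:
  assumes "bs \<noteq> []" and "\<forall>b\<in>set bs. b > 0"
  shows "conv_list (map fpow bs) t = prod_list (map Gamma bs) / Gamma (sum_list bs) * fpow (sum_list bs) t"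
  using assms
proof (induction bs arbitrary: t rule: induct_list012)
  case (2 b)
  then show ?case by (simp add: Gamma_real_pos[THEN less_imp_neq, symmetric])
next
  case (3 b c cs)
  define bs where "bs = c # cs"
  have pos: "b > 0" "sum_list bs > 0"
    using "3.prems" by (simp_all add: bs_def add_pos_nonneg less_imp_le sum_list_nonneg)
  have IH: "conv_list (map fpow bs) = (\<lambda>s. prod_list (map Gamma bs) / Gamma (sum_list bs) * fpow (sum_list bs) s)"
    using "3.IH"(2) "3.prems" by (auto simp: bs_def)
  have "conv_list (map fpow (b # bs)) t = conv (fpow b) (conv_list (map fpow bs)) t"
    by (simp add: bs_def)
  also have "\<dots> = prod_list (map Gamma bs) / Gamma (sum_list bs) * (Beta b (sum_list bs) * fpow (b + sum_list bs) t)"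
    unfolding IH conv_mult_right conv_fpow_fpow[OF pos] ..
  also have "\<dots> = prod_list (map Gamma (b # bs)) / Gamma (sum_list (b # bs)) * fpow (sum_list (b # bs)) t"
    using Gamma_real_pos[OF pos(2)] by (simp add: Beta_def field_simps)
  finally show ?case by (simp add: bs_def)
qed simp

lemma pochhammer_mult_nat:
  fixes a :: "'a::field_char_0"
  assumes n: "n > 0"
  shows "pochhammer a (n * m) = of_nat n ^ (n * m) * (\<Prod>k<n. pochhammer ((a + of_nat k) / of_nat n) m)"
proof (induction m)
  case 0
  then show ?case by simp
next
  case (Suc m)
  have "pochhammer a (n * Suc m) = pochhammer a (n * m) * pochhammer (a + of_nat (n * m)) n"
    by (metis mult_Suc_right add.commute pochhammer_product')
  also have "pochhammer (a + of_nat (n * m)) n = (\<Prod>k<n. a + of_nat (n * m) + of_nat k)"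
    by (simp add: pochhammer_prod atLeast0LessThan)
  also have "\<dots> = (\<Prod>k<n. of_nat n * ((a + of_nat k) / of_nat n + of_nat m))"
    using n by (intro prod.cong) (auto simp: field_simps)
  also have "\<dots> = of_nat n ^ n * (\<Prod>k<n. (a + of_nat k) / of_nat n + of_nat m)"
    by (simp add: prod.distrib)
  finally show ?case
    using Suc by (simp add: pochhammer_Suc prod.distrib power_add mult_ac)
qed

lemma Gamma_series'_multiplication:
  fixes \<alpha> :: real
  assumes n: "n > 0" and \<alpha>: "\<alpha> > 0" and m: "m > 0"
  shows "real n powr \<alpha> * (\<Prod>k<n. Gamma_series' ((\<alpha> + real k) / real n) m) / Gamma_series' \<alpha> (n * m)
       = fact (m - 1) ^ n * real m powr (\<Sum>k<n. real k / real n) * real n ^ (n * m) / fact (n * m - 1)"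
proof -
  define \<sigma> where "\<sigma> = (\<Sum>k<n. real k / real n)"
  define P where "P = pochhammer \<alpha> (n * m)"
  have "P > 0" unfolding P_def using pochhammer_pos \<alpha> by blast
  have "(\<Sum>k<n. (\<alpha> + real k) / real n) = \<alpha> + \<sigma>"
    using n by (simp add: \<sigma>_def add_divide_distrib sum.distrib)
  then have "(\<Prod>k<n. real m powr ((\<alpha> + real k) / real n)) = real m powr (\<alpha> + \<sigma>)"
    using m by (simp add: powr_sum[symmetric])
  moreover have "(\<Prod>k<n. pochhammer ((\<alpha> + real k) / real n) m) = P / real n ^ (n * m)"
    using pochhammer_mult_nat[OF n, of \<alpha> m] n by (simp add: P_def field_simps)
  ultimately have factors: "(\<Prod>k<n. Gamma_series' ((\<alpha> + real k) / real n) m)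
      = fact (m - 1) ^ n * real m powr (\<alpha> + \<sigma>) * real n ^ (n * m) / P"
    using m n by (simp add: Gamma_series'_def powr_def prod.distrib prod_dividef)
  have whole: "Gamma_series' \<alpha> (n * m) = fact (n * m - 1) * (real n powr \<alpha> * real m powr \<alpha>) / P"
    using n m by (simp add: Gamma_series'_def P_def powr_def ln_mult exp_add[symmetric] distrib_left)
  show ?thesis
    unfolding factors whole \<sigma>_def[symmetric] using \<open>P > 0\<close> m n
    by (simp add: field_simps powr_add)
qed

lemma Gamma_multiplication:
  fixes \<alpha> :: real
  assumes n: "n > 0" and \<alpha>: "\<alpha> > 0"
  shows "real n powr (\<alpha> - 1) * (\<Prod>k<n. Gamma ((\<alpha> + real k) / real n))
       = Gamma \<alpha> * (\<Prod>k\<in>{1..<n}. Gamma (real k / real n))"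
proof -
  define c :: "nat \<Rightarrow> real" where
    "c m = fact (m - 1) ^ n * real m powr (\<Sum>k<n. real k / real n) * real n ^ (n * m) / fact (n * m - 1)" for m
  have limit: "c \<longlonglongrightarrow> real n powr \<beta> * (\<Prod>k<n. Gamma ((\<beta> + real k) / real n)) / Gamma \<beta>"
    if \<beta>: "\<beta> > 0" for \<beta> :: real
  proof -
    have "strict_mono ((*) n)"
      using n by (simp add: strict_mono_def)
    then have "(\<lambda>m. Gamma_series' \<beta> (n * m)) \<longlonglongrightarrow> Gamma \<beta>"
      using LIMSEQ_subseq_LIMSEQ[OF Gamma_series'_LIMSEQ] by (simp add: o_def)
    then have "(\<lambda>m. real n powr \<beta> * (\<Prod>k<n. Gamma_series' ((\<beta> + real k) / real n) m) / Gamma_series' \<beta> (n * m))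
        \<longlonglongrightarrow> real n powr \<beta> * (\<Prod>k<n. Gamma ((\<beta> + real k) / real n)) / Gamma \<beta>"
      using \<beta> by (intro tendsto_intros Gamma_series'_LIMSEQ) (auto simp: less_imp_neq[symmetric])
    moreover have "\<forall>\<^sub>F m in sequentially.
        real n powr \<beta> * (\<Prod>k<n. Gamma_series' ((\<beta> + real k) / real n) m) / Gamma_series' \<beta> (n * m) = c m"
      using eventually_gt_at_top[of 0]
      by eventually_elim (simp add: c_def Gamma_series'_multiplication[OF n \<beta>])
    ultimately show ?thesis
      by (rule Lim_transform_eventually)
  qed
  have "(\<Prod>k<n. Gamma ((1 + real k) / real n)) = (\<Prod>k\<in>{0 + 1..<n + 1}. Gamma (real k / real n))"
    by (simp only: prod.shift_bounds_nat_ivl atLeast0LessThan) (simp add: add.commute)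
  also have "\<dots> = (\<Prod>k\<in>{1..<n}. Gamma (real k / real n))"
    using n by (simp add: prod.atLeastLessThan_Suc)
  finally have "real n powr \<alpha> * (\<Prod>k<n. Gamma ((\<alpha> + real k) / real n)) / Gamma \<alpha>
      = real n * (\<Prod>k\<in>{1..<n}. Gamma (real k / real n))"
    using LIMSEQ_unique[OF limit[OF \<alpha>] limit[of 1]] n by simp
  then show ?thesis
    using n Gamma_real_pos[OF \<alpha>] by (simp add: powr_diff field_simps)
qed

theorem proposition5:
  fixes \<alpha> :: real and n :: nat
  assumes "\<alpha> > 0" and "n \<ge> 2"
  shows "\<forall>t::real. t \<noteq> 0 \<longrightarrow>
    real n powr (\<alpha> - 1) * conv_list (map (\<lambda>k. fpow ((\<alpha> + real k) / real n)) [0..<n]) t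
    = conv_list (map (\<lambda>k. fpow (real k / real n)) [1..<n] @ [fpow \<alpha>]) t"
proof (intro allI impI)
  fix t :: real
  have n: "n > 0" using assms by simp
  define as where "as = map (\<lambda>k. (\<alpha> + real k) / real n) [0..<n]"
  define bs where "bs = map (\<lambda>k. real k / real n) [1..<n] @ [\<alpha>]"
  have nonempty: "as \<noteq> []" "bs \<noteq> []"
    using n by (simp_all add: as_def bs_def)
  have positive: "\<forall>b\<in>set as. b > 0" "\<forall>b\<in>set bs. b > 0"
    using assms by (auto simp: as_def bs_def)
  have "(\<Sum>k\<in>{1..<n}. real k / real n) = (\<Sum>k<n. real k / real n)"
    using n by (simp add: atLeast0LessThan[symmetric] sum.atLeast_Suc_lessThan)
  then have sums: "sum_list as = sum_list bs"
    using n by (simp add: as_def bs_def interv_sum_list_conv_sum_set_nat atLeast0LessThan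
        add_divide_distrib sum.distrib)
  have products: "real n powr (\<alpha> - 1) * prod_list (map Gamma as) = prod_list (map Gamma bs)"
    using Gamma_multiplication[OF n assms(1)]
    by (simp add: as_def bs_def prod.distinct_set_conv_list[symmetric] atLeast0LessThan o_def)
  have "map (\<lambda>k. fpow ((\<alpha> + real k) / real n)) [0..<n] = map fpow as"
    "map (\<lambda>k. fpow (real k / real n)) [1..<n] @ [fpow \<alpha>] = map fpow bs"
    by (simp_all add: as_def bs_def)
  then show "real n powr (\<alpha> - 1) * conv_list (map (\<lambda>k. fpow ((\<alpha> + real k) / real n)) [0..<n]) t
    = conv_list (map (\<lambda>k. fpow (real k / real n)) [1..<n] @ [fpow \<alpha>]) t"
    by (simp add: conv_list_map_fpow nonempty positive sums products[symmetric])
qed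

end
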